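(* Let $G$ be a finite graph, let $\lambda>0$, $\beta \in [0,\infty]$ and set $p=1-e^{-\beta}$. Then for every integer $k\ge1$, \[ Z_k({G,\lambda,\beta}) = \mathbb{E}\, Z({G_p,\lambda})^k .\]
   Context: For a finite graph $G=(V,E)$ and $I\subset V$, $E(I):=\{e\in E: e\subset I\}$. For $\lambda>0$, $\beta\in[0,\infty]$ and $k\ge1$, \[ Z_k(G,\lambda,\beta) := \sum_{I_1,\dots,I_k \subset V} \lambda^{|I_1|+\cdots+|I_k|} e^{-\beta |E(I_1) \cup \cdots \cup E(I_k)|}, \] with the convention $e^{-\infty\cdot 0}=1$ and $e^{-\infty\cdot n}=0$ for $n\ge1$. $G_p$ is the random spanning subgraph of $G$ keeping each edge independently with probability $p$, and $Z(H,\lambda):=\sum_I\lambda^{|I|}$ over independent sets $I$ of $H$ (including the empty set). *)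

theory Defs
  imports "HOL-Analysis.Analysis"
begin

definition graph :: "'a set \<Rightarrow> 'a set set \<Rightarrow> bool" where
  "graph V E \<longleftrightarrow> finite V \<and> (\<forall>e\<in>E. e \<subseteq> V \<and> card e = 2)"

definition induced_edges :: "'a set set \<Rightarrow> 'a set \<Rightarrow> 'a set set" where
  "induced_edges E I = {e \<in> E. e \<subseteq> I}"

definition exp_neg :: "ereal \<Rightarrow> real" where
  "exp_neg x = (if x = \<infinity> then 0 else exp (- real_of_ereal x))"

text \<open>Z_k(G,\<lambda>,\<beta>); the k-tuples (I_1,...,I_k) are functions on {..<k}.
  The factor e^{-\<beta> n} is exp_neg (\<beta> * n); in ereal, \<infinity> * 0 = 0.\<close>
definition Zk :: "'a set \<Rightarrow> 'a set set \<Rightarrow> real \<Rightarrow> ereal \<Rightarrow> nat \<Rightarrow> real" where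
  "Zk V E lam \<beta> k =
     (\<Sum>I\<in>Pi\<^sub>E {..<k} (\<lambda>_. Pow V).
        lam ^ (\<Sum>j<k. card (I j)) *
        exp_neg (\<beta> * ereal (real (card (\<Union>j<k. induced_edges E (I j))))))"

definition indep_set :: "'a set \<Rightarrow> 'a set set \<Rightarrow> 'a set \<Rightarrow> bool" where
  "indep_set V F I \<longleftrightarrow> I \<subseteq> V \<and> (\<forall>e\<in>F. \<not> e \<subseteq> I)"

definition Zind :: "'a set \<Rightarrow> 'a set set \<Rightarrow> real \<Rightarrow> real" where
  "Zind V F lam = (\<Sum>I\<in>{I. indep_set V F I}. lam ^ card I)"

text \<open>Expectation of f(G_p), G_p keeping each edge independently with prob. p:
  P(G_p has edge set F) = p^|F| (1-p)^(|E|-|F|) for F \<subseteq> E.\<close>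
definition expect_Gp :: "'a set set \<Rightarrow> real \<Rightarrow> ('a set set \<Rightarrow> real) \<Rightarrow> real" where
  "expect_Gp E p f = (\<Sum>F\<in>Pow E. p ^ card F * (1 - p) ^ card (E - F) * f F)"

end

theory Submission
  imports Defs
begin

text \<open>Expanding the k-th power, \<open>Z(G\<^sub>p,\<lambda>)\<^sup>k\<close> is a sum over k-tuples
  \<open>(I\<^sub>1,\<dots>,I\<^sub>k)\<close> of vertex sets of \<open>\<lambda>\<^bsup>|I\<^sub>1|+\<dots>+|I\<^sub>k|\<^esup>\<close>, where a tuple
  counts exactly when \<open>G\<^sub>p\<close> keeps no edge of \<open>U = E(I\<^sub>1) \<union> \<dots> \<union> E(I\<^sub>k)\<close>.
  By linearity of expectation, each tuple contributes its weight times the probability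
  \<open>(1-p)\<^bsup>|U|\<^esup> = e\<^bsup>-\<beta>|U|\<^esup>\<close> that all edges of \<open>U\<close> are deleted,
  which is its term in \<open>Z\<^sub>k(G,\<lambda>,\<beta>)\<close>. The argument works for every real
  \<open>\<lambda>\<close> and every \<open>k \<ge> 0\<close>.\<close>

lemma sum_Pow_binomial:
  fixes p q :: "'b::comm_semiring_1"
  assumes "finite A"
  shows "(\<Sum>F\<in>Pow A. p ^ card F * q ^ card (A - F)) = (p + q) ^ card A"
  using prod_add[OF assms, of "\<lambda>_. p" "\<lambda>_. q"] by simp

lemma exp_neg_mult_of_nat:
  assumes "\<beta> \<ge> 0"
  shows "exp_neg (\<beta> * ereal (real n)) = exp_neg \<beta> ^ n"
proof (cases "\<beta> = \<infinity>")
  case True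
  then show ?thesis
    by (cases "n = 0") (simp_all add: exp_neg_def zero_ereal_def[symmetric])
next
  case False
  then obtain r where "\<beta> = ereal r" using assms by (cases \<beta>) auto
  then show ?thesis by (simp add: exp_neg_def exp_of_nat_mult[symmetric] mult.commute)
qed

lemma expect_Gp_cong:
  assumes "\<And>F. F \<subseteq> E \<Longrightarrow> f F = g F"
  shows "expect_Gp E p f = expect_Gp E p g"
  unfolding expect_Gp_def using assms by (intro sum.cong refl) auto

lemma expect_Gp_sum:
  "expect_Gp E p (\<lambda>F. \<Sum>I\<in>K. f I F) = (\<Sum>I\<in>K. expect_Gp E p (f I))"
  unfolding expect_Gp_def sum_distrib_left by (rule sum.swap)

lemma expect_Gp_scale:
  "expect_Gp E p (\<lambda>F. c * f F) = c * expect_Gp E p f"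
  unfolding expect_Gp_def by (simp add: sum_distrib_left mult_ac)

lemma expect_Gp_avoids:
  assumes "finite E" and "U \<subseteq> E"
  shows "expect_Gp E p (\<lambda>F. of_bool (F \<inter> U = {})) = (1 - p) ^ card U"
proof -
  have card_split: "card (E - F) = card U + card (E - U - F)" if "F \<in> Pow (E - U)" for F
  proof -
    have "E - F = U \<union> (E - U - F)" using that assms(2) by auto
    moreover have "finite U" using assms by (rule finite_subset[rotated])
    then have "card (U \<union> (E - U - F)) = card U + card (E - U - F)"
      using assms(1) by (intro card_Un_disjoint) auto
    ultimately show ?thesis by simp
  qed
  have "expect_Gp E p (\<lambda>F. of_bool (F \<inter> U = {}))
      = (\<Sum>F\<in>Pow E \<inter> {F. F \<inter> U = {}}. p ^ card F * (1 - p) ^ card (E - F))"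
    unfolding expect_Gp_def using assms(1) by simp
  also have "Pow E \<inter> {F. F \<inter> U = {}} = Pow (E - U)" by auto
  also have "(\<Sum>F\<in>Pow (E - U). p ^ card F * (1 - p) ^ card (E - F))
      = (\<Sum>F\<in>Pow (E - U). (1 - p) ^ card U * (p ^ card F * (1 - p) ^ card (E - U - F)))"
    by (intro sum.cong refl) (simp add: card_split power_add)
  also have "\<dots> = (1 - p) ^ card U"
    by (simp add: sum_distrib_left[symmetric] sum_Pow_binomial assms(1))
  finally show ?thesis .
qed

lemma Zind_power:
  assumes "finite V"
  shows "Zind V F lam ^ k
    = (\<Sum>I\<in>Pi\<^sub>E {..<k} (\<lambda>_. {I. indep_set V F I}). lam ^ (\<Sum>j<k. card (I j)))"
proof -
  have "finite {I. indep_set V F I}"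
    by (rule finite_subset[of _ "Pow V"]) (auto simp: indep_set_def assms)
  then have "Zind V F lam ^ k = (\<Prod>j<k. \<Sum>I\<in>{I. indep_set V F I}. lam ^ card I)"
    by (simp add: Zind_def)
  also have "\<dots> = (\<Sum>I\<in>Pi\<^sub>E {..<k} (\<lambda>_. {I. indep_set V F I}). \<Prod>j<k. lam ^ card (I j))"
    using \<open>finite {I. indep_set V F I}\<close> by (intro prod_sum_PiE) auto
  finally show ?thesis by (simp add: power_sum)
qed

lemma PiE_indep_set_iff:
  assumes "F \<subseteq> E"
  shows "I \<in> Pi\<^sub>E {..<k} (\<lambda>_. {I. indep_set V F I}) \<longleftrightarrow>
    I \<in> Pi\<^sub>E {..<k} (\<lambda>_. Pow V) \<and> F \<inter> (\<Union>j<k. induced_edges E (I j)) = {}"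
  using assms unfolding induced_edges_def indep_set_def PiE_def Pi_def by blast

lemma Zind_power_eq_sum_avoiding:
  assumes "finite V" and "F \<subseteq> E"
  shows "Zind V F lam ^ k = (\<Sum>I\<in>Pi\<^sub>E {..<k} (\<lambda>_. Pow V).
    lam ^ (\<Sum>j<k. card (I j)) * of_bool (F \<inter> (\<Union>j<k. induced_edges E (I j)) = {}))"
proof -
  have tuples_eq: "Pi\<^sub>E {..<k} (\<lambda>_. {I. indep_set V F I})
      = {I \<in> Pi\<^sub>E {..<k} (\<lambda>_. Pow V). F \<inter> (\<Union>j<k. induced_edges E (I j)) = {}}"
    by (rule set_eqI) (simp only: PiE_indep_set_iff[OF assms(2)] mem_Collect_eq)
  show ?thesis
    using assms(1) by (simp add: Zind_power tuples_eq finite_PiE Int_def)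
qed

theorem proposition1p7:
  fixes V :: "'a set" and E :: "'a set set" and lam :: real and \<beta> :: ereal and k :: nat
  assumes "graph V E" and "lam > 0" and "\<beta> \<ge> 0" and "k \<ge> 1"
  shows "Zk V E lam \<beta> k = expect_Gp E (1 - exp_neg \<beta>) (\<lambda>F. Zind V F lam ^ k)"
proof -
  define U where "U I = (\<Union>j<k. induced_edges E (I j))" for I :: "nat \<Rightarrow> 'a set"
  have "finite V" and "E \<subseteq> Pow V"
    using assms(1) by (auto simp: graph_def)
  then have "finite E" by (meson finite_Pow_iff finite_subset)
  have U_sub: "U I \<subseteq> E" for I
    unfolding U_def induced_edges_def by auto
  have "expect_Gp E (1 - exp_neg \<beta>) (\<lambda>F. Zind V F lam ^ k)
      = expect_Gp E (1 - exp_neg \<beta>) (\<lambda>F. \<Sum>I\<in>Pi\<^sub>E {..<k} (\<lambda>_. Pow V).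
          lam ^ (\<Sum>j<k. card (I j)) * of_bool (F \<inter> U I = {}))"
    by (rule expect_Gp_cong) (simp add: Zind_power_eq_sum_avoiding[OF \<open>finite V\<close>] U_def)
  also have "\<dots> = (\<Sum>I\<in>Pi\<^sub>E {..<k} (\<lambda>_. Pow V).
      lam ^ (\<Sum>j<k. card (I j)) * exp_neg \<beta> ^ card (U I))"
    by (simp add: expect_Gp_sum expect_Gp_scale expect_Gp_avoids[OF \<open>finite E\<close> U_sub])
  also have "\<dots> = Zk V E lam \<beta> k"
    unfolding Zk_def U_def by (simp add: exp_neg_mult_of_nat[OF assms(3)])
  finally show ?thesis ..
qed

end
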